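(* Let $\mathcal{G}=(\mathcal{V},\mathcal{A})$ be the information-flow graph of a single-sender single-uniprior index-coding instance with message lengths $q_1,\dots,q_n$. Then \[ \ell^*(\mathcal{G}) = \sum_{k \in \mathcal{V}} q_k - \sum_{i \in \mathcal{L}(\mathcal{G})} q_i - \sum_{\mathcal{V}_{S} \in \mathbb{V}} \min_{a \in \mathcal{V}_{S}} q_a, \] where $\mathbb{V}$ is the set of vertex sets of all leaf SCCs of $\mathcal{G}$. Furthermore, this optimal length is achieved by a linear index code, i.e., one whose encoding function is linear over $\mathrm{GF}(2)$ (each codeword bit is an XOR of message bits).
   Context: Single-sender single-uniprior index coding: there are $n$ receivers and $n$ independent messages $x_1,\dots,x_n$; message $x_i$ consists of $q_i\ge 1$ bits, each independently uniformly distributed on $\{0,1\}$. A single sender knows all messages. Receiver $i$ knows $x_i$ a priori and requests a set $\mathcal{W}_i$ of messages with $x_i\notin\mathcal{W}_i$. The information-flow graph is the directed graph $\mathcal{G}=(\mathcal{V},\mathcal{A})$ with $\mathcal{V}=\{1,\dots,n\}$ and an arc $(j\to i)\in\mathcal{A}$ iff $x_j\in\mathcal{W}_i$. An index code of length $\ell$ consists of an encoding function $E:\{0,1\}^{\sum_i q_i}\to\{0,1\}^\ell$ and, for each receiver $i$, a decoding function $D_i$ such that $D_i(E(x_1,\dots,x_n),x_i)$ equals the tuple of messages in $\mathcal{W}_i$ for all values of the messages. $\ell^*(\mathcal{G})$ denotes the minimum length of an index code. A leaf vertex is a vertex with no outgoing arcs; $\mathcal{L}(\mathcal{G})$ is the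 set of leaf vertices. A strongly connected component (SCC) is a maximal subgraph in which every ordered pair of vertices is joined by a directed path inside the subgraph. A leaf SCC is an SCC with at least two vertices from which no arc goes to a vertex outside the SCC. *)

theory Defs
  imports Main
begin

text \<open>Vertices/receivers/messages are indexed by 0..<n. A message tuple is a function
  x :: nat => bool list, with x i the q i bits of message i (and x i = [] for i >= n).
  The information-flow graph is a set A of arcs (j,i): (j,i) in A iff receiver i requests x_j.\<close>

definition valid_msgs :: "nat \<Rightarrow> (nat \<Rightarrow> nat) \<Rightarrow> (nat \<Rightarrow> bool list) \<Rightarrow> bool" where
  "valid_msgs n q x \<longleftrightarrow> (\<forall>i<n. length (x i) = q i) \<and> (\<forall>i\<ge>n. x i = [])"

definition info_flow_graph :: "nat \<Rightarrow> (nat \<times> nat) set \<Rightarrow> bool" where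
  "info_flow_graph n A \<longleftrightarrow> A \<subseteq> {0..<n} \<times> {0..<n} \<and> (\<forall>i. (i, i) \<notin> A)"

definition requested :: "(nat \<times> nat) set \<Rightarrow> nat \<Rightarrow> (nat \<Rightarrow> bool list) \<Rightarrow> (nat \<Rightarrow> bool list)" where
  "requested A i x = (\<lambda>j. if (j, i) \<in> A then x j else [])"

definition index_code ::
  "nat \<Rightarrow> (nat \<Rightarrow> nat) \<Rightarrow> (nat \<times> nat) set \<Rightarrow> nat
   \<Rightarrow> ((nat \<Rightarrow> bool list) \<Rightarrow> bool list)
   \<Rightarrow> (nat \<Rightarrow> bool list \<Rightarrow> bool list \<Rightarrow> (nat \<Rightarrow> bool list)) \<Rightarrow> bool" where
  "index_code n q A len E D \<longleftrightarrow>
     (\<forall>x. valid_msgs n q x \<longrightarrow> length (E x) = len) \<and>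
     (\<forall>i<n. \<forall>x. valid_msgs n q x \<longrightarrow> D i (E x) (x i) = requested A i x)"

definition opt_len :: "nat \<Rightarrow> (nat \<Rightarrow> nat) \<Rightarrow> (nat \<times> nat) set \<Rightarrow> nat" where
  "opt_len n q A = (LEAST len. \<exists>E D. index_code n q A len E D)"

definition xor_bits :: "(nat \<times> nat) set \<Rightarrow> (nat \<Rightarrow> bool list) \<Rightarrow> bool" where
  "xor_bits S x = odd (card {(i, j) \<in> S. x i ! j})"

definition linear_encoding ::
  "nat \<Rightarrow> (nat \<Rightarrow> nat) \<Rightarrow> ((nat \<Rightarrow> bool list) \<Rightarrow> bool list) \<Rightarrow> bool" where
  "linear_encoding n q E \<longleftrightarrow>
     (\<exists>L. (\<forall>S\<in>set L. S \<subseteq> {(i, j). i < n \<and> j < q i}) \<and>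
          (\<forall>x. valid_msgs n q x \<longrightarrow> E x = map (\<lambda>S. xor_bits S x) L))"

definition leaf_vertices :: "nat \<Rightarrow> (nat \<times> nat) set \<Rightarrow> nat set" where
  "leaf_vertices n A = {i. i < n \<and> (\<forall>j. (i, j) \<notin> A)}"

definition strongly_connected_in :: "(nat \<times> nat) set \<Rightarrow> nat set \<Rightarrow> bool" where
  "strongly_connected_in A C \<longleftrightarrow> (\<forall>u\<in>C. \<forall>v\<in>C. (u, v) \<in> (A \<inter> (C \<times> C))\<^sup>*)"

definition is_scc :: "nat \<Rightarrow> (nat \<times> nat) set \<Rightarrow> nat set \<Rightarrow> bool" where
  "is_scc n A C \<longleftrightarrow> C \<noteq> {} \<and> C \<subseteq> {0..<n} \<and> strongly_connected_in A C \<and>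
     (\<forall>C'. C \<subseteq> C' \<and> C' \<subseteq> {0..<n} \<and> strongly_connected_in A C' \<longrightarrow> C' = C)"

definition is_leaf_scc :: "nat \<Rightarrow> (nat \<times> nat) set \<Rightarrow> nat set \<Rightarrow> bool" where
  "is_leaf_scc n A C \<longleftrightarrow> is_scc n A C \<and> card C \<ge> 2 \<and> (\<forall>u\<in>C. \<forall>v. (u, v) \<in> A \<longrightarrow> v \<in> C)"

definition leaf_sccs :: "nat \<Rightarrow> (nat \<times> nat) set \<Rightarrow> nat set set" where
  "leaf_sccs n A = {C. is_leaf_scc n A C}"

end

theory Submission
  imports Defs
begin

text \<open>An encoding admits decoders exactly when it is separating: two message tuples with the
  same codeword that agree on \<open>x\<^sub>i\<close> agree on every message requested by \<open>i\<close>. Agreement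
  then propagates backwards along paths, and every vertex reaches a leaf or a leaf SCC. Hence
  the codeword together with the messages of the leaves and of one vertex per leaf SCC
  determines all messages, and counting message tuples gives the lower bound; choosing in each
  leaf SCC a vertex \<open>a\<close> of minimal length makes this bound as small as possible. Conversely,
  sending every bit of every other message, XORed inside a leaf SCC with the corresponding
  bit of \<open>x\<^sub>a\<close> where that bit exists, is a separating linear code meeting the bound.\<close>

section \<open>Message tuples\<close>

definition msgs_on :: "nat set \<Rightarrow> (nat \<Rightarrow> nat) \<Rightarrow> (nat \<Rightarrow> bool list) set" where
  "msgs_on I q = {x. (\<forall>i\<in>I. length (x i) = q i) \<and> (\<forall>i. i \<notin> I \<longrightarrow> x i = [])}"

lemma valid_msgs_iff_msgs_on: "valid_msgs n q x \<longleftrightarrow> x \<in> msgs_on {..<n} q"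
  by (auto simp: valid_msgs_def msgs_on_def)

lemma valid_msgs_eqI:
  assumes "valid_msgs n q x" "valid_msgs n q y" "v < n" "\<And>k. k < q v \<Longrightarrow> x v ! k = y v ! k"
  shows "x v = y v"
  using assms by (intro nth_equalityI) (auto simp: valid_msgs_def)

lemma card_bool_lists: "card {w :: bool list. length w = k} = 2 ^ k"
  using card_lists_length_eq[of "UNIV :: bool set" k] by simp

lemma msgs_on_insert_bij:
  assumes "m \<notin> I"
  shows "bij_betw (\<lambda>(x, w). x(m := w)) (msgs_on I q \<times> {w. length w = q m}) (msgs_on (insert m I) q)"
proof (rule bij_betw_imageI)
  show "inj_on (\<lambda>(x, w). x(m := w)) (msgs_on I q \<times> {w. length w = q m})"
  proof (rule inj_onI, clarify)
    fix x w x' w'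
    assume "x \<in> msgs_on I q" "x' \<in> msgs_on I q" and eq: "x(m := w) = x'(m := w')"
    then have "x m = x' m" using assms by (simp add: msgs_on_def)
    then show "x = x' \<and> w = w'" using eq by (metis fun_upd_idem_iff fun_upd_upd fun_upd_same)
  qed
  show "(\<lambda>(x, w). x(m := w)) ` (msgs_on I q \<times> {w. length w = q m}) = msgs_on (insert m I) q"
  proof (intro equalityI subsetI)
    fix y assume y: "y \<in> msgs_on (insert m I) q"
    then have "(y(m := []), y m) \<in> msgs_on I q \<times> {w. length w = q m}"
      using assms by (auto simp: msgs_on_def)
    then show "y \<in> (\<lambda>(x, w). x(m := w)) ` (msgs_on I q \<times> {w. length w = q m})"
      by (force intro: rev_image_eqI)
  qed (use assms in \<open>auto simp: msgs_on_def\<close>)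
qed

lemma finite_card_msgs_on:
  assumes "finite I"
  shows "finite (msgs_on I q) \<and> card (msgs_on I q) = 2 ^ (\<Sum>i\<in>I. q i)"
  using assms
proof (induction rule: finite_induct)
  case empty
  have "msgs_on {} q = {\<lambda>_. []}" by (auto simp: msgs_on_def)
  then show ?case by simp
next
  case (insert m I)
  have fin: "finite {w :: bool list. length w = q m}"
    using finite_lists_length_eq[of "UNIV :: bool set"] by simp
  note bij = msgs_on_insert_bij[OF insert.hyps(2), of q]
  show ?case
    using bij_betw_finite[OF bij] bij_betw_same_card[OF bij] insert.IH insert.hyps fin
    by (simp add: card_cartesian_product card_bool_lists power_add mult.commute)
qed

section \<open>Separating encodings\<close>

definition separating ::
  "nat \<Rightarrow> (nat \<Rightarrow> nat) \<Rightarrow> (nat \<times> nat) set \<Rightarrow> ((nat \<Rightarrow> bool list) \<Rightarrow> bool list) \<Rightarrow> bool" where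
  "separating n q A E \<longleftrightarrow>
     (\<forall>x y i j. valid_msgs n q x \<longrightarrow> valid_msgs n q y \<longrightarrow> E x = E y \<longrightarrow>
        i < n \<longrightarrow> (j, i) \<in> A \<longrightarrow> x i = y i \<longrightarrow> x j = y j)"

lemma separatingD:
  "separating n q A E \<Longrightarrow> valid_msgs n q x \<Longrightarrow> valid_msgs n q y \<Longrightarrow> E x = E y \<Longrightarrow>
   i < n \<Longrightarrow> (j, i) \<in> A \<Longrightarrow> x i = y i \<Longrightarrow> x j = y j"
  unfolding separating_def by blast

lemma index_code_separating:
  assumes "index_code n q A len E D"
  shows "separating n q A E"
  unfolding separating_def
proof (intro allI impI)
  fix x y i j
  assume "valid_msgs n q x" "valid_msgs n q y" "E x = E y" "i < n" "(j, i) \<in> A" "x i = y i"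
  then have "requested A i x = requested A i y"
    using assms unfolding index_code_def by metis
  then show "x j = y j" using \<open>(j, i) \<in> A\<close> by (metis requested_def)
qed

text \<open>Receiver \<open>i\<close> decodes by picking any message tuple consistent with the codeword and
  with its own message; separation makes the choice irrelevant for its requests.\<close>
lemma separating_index_code:
  assumes sep: "separating n q A E" and len: "\<forall>x. valid_msgs n q x \<longrightarrow> length (E x) = len"
  shows "\<exists>D. index_code n q A len E D"
proof
  let ?D = "\<lambda>i c xi. requested A i (SOME y. valid_msgs n q y \<and> E y = c \<and> y i = xi)"
  show "index_code n q A len E ?D"
    unfolding index_code_def
  proof (intro conjI allI impI)
    fix i x assume i: "i < n" and x: "valid_msgs n q x"
    let ?P = "\<lambda>y. valid_msgs n q y \<and> E y = E x \<and> y i = x i"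
    have "?P (SOME y. ?P y)" using x by (intro someI[of ?P x]) simp
    then have "requested A i (SOME y. ?P y) = requested A i x"
      using separatingD[OF sep _ x _ i] by (auto simp: requested_def)
    then show "?D i (E x) (x i) = requested A i x" by simp
  qed (use len in blast)
qed

section \<open>Leaf strongly connected components of information-flow graphs\<close>

definition forward_closed :: "(nat \<times> nat) set \<Rightarrow> nat set \<Rightarrow> bool" where
  "forward_closed A C \<longleftrightarrow> (\<forall>u\<in>C. \<forall>v. (u, v) \<in> A \<longrightarrow> v \<in> C)"

lemma forward_closed_rtrancl:
  assumes "forward_closed A C" "a \<in> C" "(a, b) \<in> A\<^sup>*"
  shows "(a, b) \<in> (A \<inter> C \<times> C)\<^sup>* \<and> b \<in> C"
  using assms(3)
proof (induction rule: rtrancl_induct)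
  case (step y z)
  then have "z \<in> C" using assms(1) unfolding forward_closed_def by blast
  with step show ?case by (meson IntI SigmaI rtrancl.rtrancl_into_rtrancl)
qed (use assms in simp)

lemma strongly_connected_in_rtrancl:
  "strongly_connected_in A C \<Longrightarrow> u \<in> C \<Longrightarrow> v \<in> C \<Longrightarrow> (u, v) \<in> A\<^sup>*"
  unfolding strongly_connected_in_def by (meson inf_le1 rtrancl_mono subsetD)

locale flow_graph =
  fixes n :: nat and A :: "(nat \<times> nat) set"
  assumes info_flow_graph: "info_flow_graph n A"
begin

lemma arc_bounded: "(a, b) \<in> A \<Longrightarrow> a < n \<and> b < n"
  using info_flow_graph unfolding info_flow_graph_def by auto

lemma no_loop: "(a, a) \<notin> A"
  using info_flow_graph unfolding info_flow_graph_def by auto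

lemma rtrancl_bounded: "(a, b) \<in> A\<^sup>* \<Longrightarrow> a < n \<Longrightarrow> b < n"
  by (induction rule: rtrancl_induct) (auto dest: arc_bounded)

lemma finite_reachable: "v < n \<Longrightarrow> finite (A\<^sup>* `` {v})"
  by (rule finite_subset[of _ "{..<n}"]) (auto dest: rtrancl_bounded)

text \<open>A vertex reachable from \<open>v\<close> with the fewest reachable vertices can reach back from
  everything it reaches.\<close>
lemma reaches_bottom_vertex:
  assumes "v < n"
  obtains u where "(v, u) \<in> A\<^sup>*" "\<And>w. (u, w) \<in> A\<^sup>* \<Longrightarrow> (w, u) \<in> A\<^sup>*"
proof -
  obtain u where vu: "(v, u) \<in> A\<^sup>*"
    and least: "\<And>u'. (v, u') \<in> A\<^sup>* \<Longrightarrow> card (A\<^sup>* `` {u}) \<le> card (A\<^sup>* `` {u'})"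
    using ex_has_least_nat[of "\<lambda>u. (v, u) \<in> A\<^sup>*" v "\<lambda>u. card (A\<^sup>* `` {u})"] by auto
  have "(w, u) \<in> A\<^sup>*" if uw: "(u, w) \<in> A\<^sup>*" for w
  proof -
    have "A\<^sup>* `` {w} \<subseteq> A\<^sup>* `` {u}" using uw by auto
    moreover have "card (A\<^sup>* `` {u}) \<le> card (A\<^sup>* `` {w})" using least vu uw by (meson rtrancl_trans)
    ultimately have "A\<^sup>* `` {w} = A\<^sup>* `` {u}"
      using finite_reachable[OF rtrancl_bounded[OF vu assms]] by (meson card_seteq)
    then show ?thesis by auto
  qed
  with vu that show ?thesis by blast
qed

lemma bottom_vertex_leaf_scc:
  assumes u: "u < n" and bottom: "\<And>w. (u, w) \<in> A\<^sup>* \<Longrightarrow> (w, u) \<in> A\<^sup>*" and arc: "(u, w) \<in> A"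
  shows "A\<^sup>* `` {u} \<in> leaf_sccs n A"
proof -
  let ?C = "A\<^sup>* `` {u}"
  have closed: "forward_closed A ?C"
    unfolding forward_closed_def by (auto intro: rtrancl_into_rtrancl)
  have sc: "strongly_connected_in A ?C"
    unfolding strongly_connected_in_def
  proof (intro ballI)
    fix a b assume a: "a \<in> ?C" and b: "b \<in> ?C"
    then have "(a, b) \<in> A\<^sup>*" using bottom by (meson Image_singleton_iff rtrancl_trans)
    then show "(a, b) \<in> (A \<inter> ?C \<times> ?C)\<^sup>*" using forward_closed_rtrancl[OF closed a] by blast
  qed
  have maximal: "C' = ?C" if "?C \<subseteq> C'" "strongly_connected_in A C'" for C'
  proof
    show "C' \<subseteq> ?C"
      using that(1) strongly_connected_in_rtrancl[OF that(2), of u] by blast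
  qed (use that in simp)
  have "{u, w} \<subseteq> ?C" "u \<noteq> w" using arc no_loop by auto
  then have "card ?C \<ge> 2" using card_mono[OF finite_reachable[OF u], of "{u, w}"] by simp
  moreover have "?C \<subseteq> {0..<n}" "?C \<noteq> {}" using u by (auto dest: rtrancl_bounded)
  ultimately show ?thesis
    using closed sc maximal
    unfolding leaf_sccs_def is_leaf_scc_def is_scc_def forward_closed_def by blast
qed

lemma leaf_sccsD:
  assumes "C \<in> leaf_sccs n A"
  shows "C \<subseteq> {..<n}" "finite C" "C \<noteq> {}" "forward_closed A C" "strongly_connected_in A C"
    "card C \<ge> 2"
proof -
  show sub: "C \<subseteq> {..<n}"
    using assms unfolding leaf_sccs_def is_leaf_scc_def is_scc_def atLeast0LessThan by blast
  show "finite C" using finite_subset[OF sub] by simp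
qed (use assms in \<open>simp_all add: leaf_sccs_def is_leaf_scc_def is_scc_def forward_closed_def\<close>)

lemma leaf_sccs_disjoint:
  assumes "C1 \<in> leaf_sccs n A" "C2 \<in> leaf_sccs n A" "w \<in> C1" "w \<in> C2"
  shows "C1 = C2"
proof -
  have "C2 \<subseteq> C1"
    using strongly_connected_in_rtrancl[OF leaf_sccsD(5)[OF assms(2)] assms(4)]
      forward_closed_rtrancl[OF leaf_sccsD(4)[OF assms(1)] assms(3)] by blast
  moreover have "is_scc n A C2" using assms(2) by (simp add: leaf_sccs_def is_leaf_scc_def)
  ultimately show ?thesis
    using leaf_sccsD(1,5)[OF assms(1)] unfolding is_scc_def atLeast0LessThan by blast
qed

lemma leaf_scc_not_leaf_vertex:
  assumes C: "C \<in> leaf_sccs n A" and v: "v \<in> C"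
  shows "v \<notin> leaf_vertices n A"
proof -
  obtain w where w: "w \<in> C" "w \<noteq> v"
    using leaf_sccsD(2,6)[OF C]
    by (metis card_le_Suc0_iff_eq not_less_eq_eq numeral_2_eq_2)
  have "(v, w) \<in> (A \<inter> C \<times> C)\<^sup>*"
    using leaf_sccsD(5)[OF C] v w(1) unfolding strongly_connected_in_def by blast
  then obtain v' where "(v, v') \<in> A" using w(2) by (cases rule: converse_rtranclE) auto
  then show ?thesis unfolding leaf_vertices_def by blast
qed

lemma finite_leaf_sccs: "finite (leaf_sccs n A)"
  by (rule finite_subset[of _ "Pow {..<n}"]) (auto dest: leaf_sccsD(1))

lemma finite_leaf_vertices: "finite (leaf_vertices n A)"
  by (rule finite_subset[of _ "{..<n}"]) (auto simp: leaf_vertices_def)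

end

section \<open>The counting bound\<close>

context flow_graph
begin

lemma separating_rtrancl:
  assumes sep: "separating n q A E" and x: "valid_msgs n q x" and y: "valid_msgs n q y"
    and E: "E x = E y" and vu: "(v, u) \<in> A\<^sup>*" and agree: "x u = y u"
  shows "x v = y v"
  using vu
proof (induction rule: converse_rtrancl_induct)
  case (step v w)
  then show ?case using separatingD[OF sep x y E] arc_bounded by blast
qed (use agree in simp)

text \<open>The codeword together with the messages on a set \<open>K\<close> reached from every vertex
  determines all messages, so \<open>(x \<mapsto> (E x, x|\<^sub>K))\<close> is injective.\<close>
lemma separating_length_bound:
  assumes sep: "separating n q A E" and len: "\<forall>x. valid_msgs n q x \<longrightarrow> length (E x) = len"
    and K: "K \<subseteq> {..<n}" and reach: "\<And>v. v < n \<Longrightarrow> \<exists>k\<in>K. (v, k) \<in> A\<^sup>*"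
  shows "(\<Sum>k<n. q k) \<le> len + (\<Sum>k\<in>K. q k)"
proof -
  define G where "G x = (E x, \<lambda>k. if k \<in> K then x k else [])" for x :: "nat \<Rightarrow> bool list"
  let ?V = "msgs_on {..<n} q"
  have finK: "finite K" using K finite_subset by blast
  have "inj_on G ?V"
  proof (rule inj_onI)
    fix x y assume x: "x \<in> ?V" and y: "y \<in> ?V" and "G x = G y"
    then have E: "E x = E y" and onK: "\<forall>k\<in>K. x k = y k"
      unfolding G_def by (simp_all add: fun_eq_iff) metis
    show "x = y"
    proof
      fix v show "x v = y v"
      proof (cases "v < n")
        case True
        then obtain k where "k \<in> K" "(v, k) \<in> A\<^sup>*" using reach by blast
        then show ?thesis
          using separating_rtrancl[OF sep _ _ E] onK x y by (simp add: valid_msgs_iff_msgs_on)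
      qed (use x y in \<open>simp add: msgs_on_def\<close>)
    qed
  qed
  moreover have "G ` ?V \<subseteq> {c. length c = len} \<times> msgs_on K q"
    using len K by (auto simp: G_def msgs_on_def valid_msgs_iff_msgs_on)
  ultimately have "card ?V \<le> card ({c :: bool list. length c = len} \<times> msgs_on K q)"
    using finite_card_msgs_on[OF finK] finite_lists_length_eq[of "UNIV :: bool set"]
    by (intro card_inj_on_le) auto
  then have "(2::nat) ^ (\<Sum>k<n. q k) \<le> 2 ^ (len + (\<Sum>k\<in>K. q k))"
    using finite_card_msgs_on[of "{..<n}" q] finite_card_msgs_on[OF finK, of q]
    by (simp add: card_cartesian_product card_bool_lists power_add)
  then show ?thesis by (simp add: power_le_imp_le_exp)
qed

end

section \<open>An optimal linear code\<close>

lemma xor_bits_singleton: "xor_bits {(v, k)} x = x v ! k"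
proof -
  have "{(i, j). (i, j) \<in> {(v, k)} \<and> x i ! j} = (if x v ! k then {(v, k)} else {})" by auto
  then show ?thesis unfolding xor_bits_def by simp
qed

lemma xor_bits_pair:
  assumes "v \<noteq> a"
  shows "xor_bits {(v, k), (a, k)} x \<longleftrightarrow> x v ! k \<noteq> x a ! k"
proof -
  have "{(i, j). (i, j) \<in> {(v, k), (a, k)} \<and> x i ! j} =
        (if x v ! k then {(v, k)} else {}) \<union> (if x a ! k then {(a, k)} else {})" by auto
  then show ?thesis unfolding xor_bits_def using assms by auto
qed

locale index_coding = flow_graph +
  fixes q :: "nat \<Rightarrow> nat"
begin

definition pivot :: "nat set \<Rightarrow> nat" where
  "pivot C = (SOME a. a \<in> C \<and> q a = Min (q ` C))"

lemma pivot:
  assumes "C \<in> leaf_sccs n A"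
  shows "pivot C \<in> C" "q (pivot C) = Min (q ` C)" "\<And>b. b \<in> C \<Longrightarrow> q (pivot C) \<le> q b"
proof -
  have "Min (q ` C) \<in> q ` C" using leaf_sccsD(2,3)[OF assms] by simp
  then have "\<exists>a. a \<in> C \<and> q a = Min (q ` C)" by force
  then have "pivot C \<in> C \<and> q (pivot C) = Min (q ` C)"
    unfolding pivot_def by (rule someI_ex)
  then show "pivot C \<in> C" "q (pivot C) = Min (q ` C)" by auto
  then show "\<And>b. b \<in> C \<Longrightarrow> q (pivot C) \<le> q b" using leaf_sccsD(2)[OF assms] by simp
qed

definition anchors :: "nat set" where
  "anchors = leaf_vertices n A \<union> pivot ` leaf_sccs n A"

lemma anchors_subset: "anchors \<subseteq> {..<n}"
  unfolding anchors_def leaf_vertices_def using pivot(1) leaf_sccsD(1) by fastforce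

lemma reaches_anchor: "v < n \<Longrightarrow> \<exists>k\<in>anchors. (v, k) \<in> A\<^sup>*"
proof -
  assume v: "v < n"
  then obtain u where vu: "(v, u) \<in> A\<^sup>*" and bottom: "\<And>w. (u, w) \<in> A\<^sup>* \<Longrightarrow> (w, u) \<in> A\<^sup>*"
    using reaches_bottom_vertex by blast
  have u: "u < n" using rtrancl_bounded[OF vu v] .
  show ?thesis
  proof (cases "\<exists>w. (u, w) \<in> A")
    case False
    then have "u \<in> anchors" using u by (auto simp: anchors_def leaf_vertices_def)
    with vu show ?thesis by blast
  next
    case True
    then have C: "A\<^sup>* `` {u} \<in> leaf_sccs n A" using bottom_vertex_leaf_scc[OF u bottom] by blast
    then have "(v, pivot (A\<^sup>* `` {u})) \<in> A\<^sup>*" using pivot(1)[OF C] vu by auto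
    moreover have "pivot (A\<^sup>* `` {u}) \<in> anchors" using C by (auto simp: anchors_def)
    ultimately show ?thesis by blast
  qed
qed

lemma sum_anchors:
  "(\<Sum>k\<in>anchors. q k) = (\<Sum>i\<in>leaf_vertices n A. q i) + (\<Sum>C\<in>leaf_sccs n A. Min (q ` C))"
proof -
  have "leaf_vertices n A \<inter> pivot ` leaf_sccs n A = {}"
    using leaf_scc_not_leaf_vertex pivot(1) by blast
  moreover have "inj_on pivot (leaf_sccs n A)"
    by (intro inj_onI) (metis leaf_sccs_disjoint pivot(1))
  ultimately show ?thesis
    unfolding anchors_def using finite_leaf_vertices finite_leaf_sccs
    by (simp add: sum.union_disjoint sum.reindex pivot(2))
qed

definition scc_of :: "nat \<Rightarrow> nat set" where
  "scc_of v = (THE C. C \<in> leaf_sccs n A \<and> v \<in> C)"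

lemma scc_of_eq: "C \<in> leaf_sccs n A \<Longrightarrow> v \<in> C \<Longrightarrow> scc_of v = C"
  unfolding scc_of_def by (rule the_equality) (auto dest: leaf_sccs_disjoint)

definition coded_bit :: "nat \<Rightarrow> nat \<Rightarrow> (nat \<times> nat) set" where
  "coded_bit v k =
     (if v \<in> \<Union>(leaf_sccs n A) \<and> k < q (pivot (scc_of v))
      then {(v, k), (pivot (scc_of v), k)} else {(v, k)})"

definition coded_bits :: "(nat \<times> nat) set list" where
  "coded_bits = concat (map (\<lambda>v. if v \<in> anchors then [] else map (coded_bit v) [0..<q v]) [0..<n])"

definition linear_code :: "(nat \<Rightarrow> bool list) \<Rightarrow> bool list" where
  "linear_code x = map (\<lambda>S. xor_bits S x) coded_bits"

lemma coded_bit_leaf_scc: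
  assumes "C \<in> leaf_sccs n A" "w \<in> C"
  shows "coded_bit w k = (if k < q (pivot C) then {(w, k), (pivot C, k)} else {(w, k)})"
  using assms scc_of_eq by (auto simp: coded_bit_def)

lemma length_coded_bits: "length coded_bits + (\<Sum>k\<in>anchors. q k) = (\<Sum>k<n. q k)"
proof -
  have "length coded_bits = (\<Sum>v\<leftarrow>[0..<n]. if v \<in> anchors then 0 else q v)"
    by (simp add: coded_bits_def length_concat o_def if_distrib cong: if_cong)
  also have "\<dots> = (\<Sum>v<n. if v \<in> anchors then 0 else q v)"
    by (simp add: sum_list_distinct_conv_sum_set atLeast0LessThan)
  finally have "length coded_bits = (\<Sum>v<n. if v \<in> anchors then 0 else q v)" .
  moreover have "(\<Sum>k\<in>anchors. q k) = (\<Sum>v<n. if v \<in> anchors then q v else 0)"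
    using anchors_subset by (simp add: sum.If_cases Int_absorb1)
  ultimately show ?thesis by (simp flip: sum.distrib add: if_distrib cong: if_cong)
qed

lemma linear_encoding_linear_code: "linear_encoding n q linear_code"
  unfolding linear_encoding_def linear_code_def
proof (intro exI conjI ballI allI impI)
  fix S assume "S \<in> set coded_bits"
  then obtain v k where v: "v < n" "k < q v" and S: "S = coded_bit v k"
    by (auto simp: coded_bits_def split: if_splits)
  show "S \<subseteq> {(i, j). i < n \<and> j < q i}"
  proof (cases "v \<in> \<Union>(leaf_sccs n A)")
    case True
    then obtain C where C: "C \<in> leaf_sccs n A" "v \<in> C" by blast
    then have "pivot C < n" using pivot(1) leaf_sccsD(1) by blast
    then show ?thesis using S v coded_bit_leaf_scc[OF C] by auto
  qed (use S v in \<open>auto simp: coded_bit_def\<close>)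
qed simp

lemma non_pivot_not_anchor:
  assumes "C \<in> leaf_sccs n A" "w \<in> C" "w \<noteq> pivot C"
  shows "w \<notin> anchors"
  using assms leaf_scc_not_leaf_vertex leaf_sccs_disjoint pivot(1)
  unfolding anchors_def by blast

lemma linear_code_xor_bits_eq:
  assumes "linear_code x = linear_code y" "v < n" "v \<notin> anchors" "k < q v"
  shows "xor_bits (coded_bit v k) x = xor_bits (coded_bit v k) y"
proof -
  have "coded_bit v k \<in> set coded_bits" using assms(2-4) unfolding coded_bits_def by force
  then show ?thesis using assms(1) unfolding linear_code_def by (simp add: map_eq_conv)
qed

lemma linear_code_agree_outside_leaf_sccs:
  assumes x: "valid_msgs n q x" and y: "valid_msgs n q y" and eq: "linear_code x = linear_code y"
    and v: "v < n" "v \<notin> anchors" "v \<notin> \<Union>(leaf_sccs n A)"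
  shows "x v = y v"
proof (rule valid_msgs_eqI[OF x y v(1)])
  fix k assume "k < q v"
  then show "x v ! k = y v ! k"
    using linear_code_xor_bits_eq[OF eq v(1,2)] v(3) by (simp add: coded_bit_def xor_bits_singleton)
qed

lemma linear_code_agree_pivot_iff:
  assumes x: "valid_msgs n q x" and y: "valid_msgs n q y" and eq: "linear_code x = linear_code y"
    and C: "C \<in> leaf_sccs n A" and w: "w \<in> C"
  shows "x w = y w \<longleftrightarrow> x (pivot C) = y (pivot C)"
proof (cases "w = pivot C")
  case False
  let ?a = "pivot C"
  have wn: "w < n" and an: "?a < n" using w pivot(1)[OF C] leaf_sccsD(1)[OF C] by auto
  note code = linear_code_xor_bits_eq[OF eq wn non_pivot_not_anchor[OF C w False]]
  have pair: "x w ! k = y w ! k \<longleftrightarrow> x ?a ! k = y ?a ! k" if "k < q ?a" for k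
    using code[of k] that pivot(3)[OF C w] coded_bit_leaf_scc[OF C w] xor_bits_pair[OF False]
    by auto
  have single: "x w ! k = y w ! k" if "\<not> k < q ?a" "k < q w" for k
    using code[OF that(2)] that(1) coded_bit_leaf_scc[OF C w] by (simp add: xor_bits_singleton)
  show ?thesis
  proof
    assume "x w = y w"
    then show "x ?a = y ?a" using pair by (intro valid_msgs_eqI[OF x y an]) simp
  next
    assume "x ?a = y ?a"
    then show "x w = y w" using pair single by (intro valid_msgs_eqI[OF x y wn]) auto
  qed
qed simp

lemma linear_code_separating: "separating n q A linear_code"
  unfolding separating_def
proof (intro allI impI)
  fix x y i j
  assume x: "valid_msgs n q x" and y: "valid_msgs n q y" and eq: "linear_code x = linear_code y"
    and "i < n" and ji: "(j, i) \<in> A" and agree: "x i = y i"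
  show "x j = y j"
  proof (cases "j \<in> \<Union>(leaf_sccs n A)")
    case True
    then obtain C where C: "C \<in> leaf_sccs n A" "j \<in> C" by blast
    then have "i \<in> C" using leaf_sccsD(4)[OF C(1)] ji unfolding forward_closed_def by blast
    then show ?thesis
      using agree linear_code_agree_pivot_iff[OF x y eq C(1)] C(2) by blast
  next
    case False
    then have "j \<notin> anchors"
      using ji pivot(1) unfolding anchors_def leaf_vertices_def by blast
    then show ?thesis
      using linear_code_agree_outside_leaf_sccs[OF x y eq] False arc_bounded[OF ji] by blast
  qed
qed

lemma index_code_linear_code: "\<exists>D. index_code n q A (length coded_bits) linear_code D"
  by (rule separating_index_code[OF linear_code_separating]) (simp add: linear_code_def)

lemma opt_len_eq_length_coded_bits: "opt_len n q A = length coded_bits"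
  unfolding opt_len_def
proof (rule Least_equality)
  show "\<exists>E D. index_code n q A (length coded_bits) E D" using index_code_linear_code by blast
next
  fix len assume "\<exists>E D. index_code n q A len E D"
  then obtain E D where code: "index_code n q A len E D" by blast
  have "(\<Sum>k<n. q k) \<le> len + (\<Sum>k\<in>anchors. q k)"
    using index_code_separating[OF code] code anchors_subset reaches_anchor
    by (intro separating_length_bound) (auto simp: index_code_def)
  then show "length coded_bits \<le> len" using length_coded_bits by linarith
qed

end

theorem theorem3:
  fixes n :: nat and q :: "nat \<Rightarrow> nat" and A :: "(nat \<times> nat) set"
  assumes "info_flow_graph n A"
    and "\<forall>i<n. q i \<ge> 1"
  shows "int (opt_len n q A) =
           (\<Sum>k<n. int (q k)) - (\<Sum>i\<in>leaf_vertices n A. int (q i))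
           - (\<Sum>C\<in>leaf_sccs n A. int (Min (q ` C)))
       \<and> (\<exists>E D. index_code n q A (opt_len n q A) E D \<and> linear_encoding n q E)"
proof -
  interpret index_coding n A q by unfold_locales (rule assms(1))
  have "opt_len n q A + (\<Sum>i\<in>leaf_vertices n A. q i) + (\<Sum>C\<in>leaf_sccs n A. Min (q ` C))
        = (\<Sum>k<n. q k)"
    using opt_len_eq_length_coded_bits length_coded_bits sum_anchors by simp
  then have "int (opt_len n q A) =
           (\<Sum>k<n. int (q k)) - (\<Sum>i\<in>leaf_vertices n A. int (q i))
           - (\<Sum>C\<in>leaf_sccs n A. int (Min (q ` C)))"
    by (simp flip: of_nat_sum add: algebra_simps)
  moreover have "\<exists>E D. index_code n q A (opt_len n q A) E D \<and> linear_encoding n q E"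
    using index_code_linear_code linear_encoding_linear_code opt_len_eq_length_coded_bits by auto
  ultimately show ?thesis ..
qed

end
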